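(* Assume $k$ satisfies (A1)–(A3) and $\alpha>1$. Then the function $f_r:(0,\infty)\to\mathbb{R}$, $f_r(c)=\frac{k(c)-r}{c}$, has a unique critical point $c_{opt}$, i.e. a unique $c>0$ with $k'(c)=\frac{k(c)-r}{c}$, and $c_{opt}$ is a global maximizer of $f_r$ on $(0,\infty)$. Moreover, in the sigmoidal case (A3)(ii), $c_{opt}>c_{infl}$.
   Context: Let $r>0$ and let $k:[0,\infty)\to[0,\infty)$ satisfy: (A1) $k(0)=0$, $k$ is continuous and strictly increasing on $[0,\infty)$, and twice differentiable on $(0,\infty)$; (A2) $\lim_{c\to\infty}k(c)=k_{max}<\infty$; (A3) either (i) (concave case) $k''(c)<0$ for all $c>0$, or (ii) (sigmoidal case) there is $c_{infl}>0$ with $k''(c)>0$ for $0<c<c_{infl}$ and $k''(c)<0$ for $c>c_{infl}$. Set $\alpha=k_{max}/r$. *)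

theory Defs
  imports "HOL-Analysis.Analysis"
begin

end

theory Submission
  imports Defs
begin

text \<open>Writing \<open>g c = c k'(c) - k c\<close> we have \<open>f\<^sub>r'(c) = (g c + r) / c\<^sup>2\<close>, so the critical points of
  \<open>f\<^sub>r\<close> are the solutions of \<open>g c = -r\<close>. Take the inflection point to be \<open>0\<close> in the concave
  case. Before it \<open>k'\<close> increases and \<open>k(0) = 0\<close>, so \<open>k c < c k'(c)\<close> by the mean value theorem,
  i.e. \<open>g > 0\<close>; after it \<open>g' = c k'' < 0\<close>. Hence \<open>g c = -r\<close> has at most one solution, and it lies
  beyond the inflection point. A solution exists because \<open>f\<^sub>r\<close> is negative near \<open>0\<close>, positive
  somewhere (as \<open>k\<^sub>m\<^sub>a\<^sub>x > r\<close>) and tends to \<open>0\<close> at infinity, hence attains its maximum.\<close>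

definition tangent_gap :: "(real \<Rightarrow> real) \<Rightarrow> real \<Rightarrow> real" where
  "tangent_gap k c = c * deriv k c - k c"

lemma tangent_gap_pos_before_inflection:
  fixes k :: "real \<Rightarrow> real"
  assumes k0: "k 0 = 0" and cont: "continuous_on {0..} k"
    and d1: "\<And>c. c > 0 \<Longrightarrow> (k has_real_derivative deriv k c) (at c)"
    and d2: "\<And>c. c > 0 \<Longrightarrow> (deriv k has_real_derivative deriv (deriv k) c) (at c)"
    and convex: "\<And>c. 0 < c \<Longrightarrow> c < ci \<Longrightarrow> deriv (deriv k) c > 0"
    and c: "0 < c" "c \<le> ci"
  shows "tangent_gap k c > 0"
proof -
  have "continuous_on {0..c} k" using cont by (rule continuous_on_subset) auto
  moreover have "\<And>x. 0 < x \<Longrightarrow> x < c \<Longrightarrow> k differentiable (at x)"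
    using d1 real_differentiable_def by blast
  ultimately obtain l z where z: "0 < z" "z < c" "DERIV k z :> l" "k c - k 0 = (c - 0) * l"
    using MVT[OF c(1)] by blast
  have l: "l = deriv k z" using DERIV_unique[OF z(3) d1[OF z(1)]] .
  obtain w where w: "z < w" "w < c" "deriv k c - deriv k z = (c - z) * deriv (deriv k) w"
    using MVT2[OF z(2), of "deriv k" "deriv (deriv k)"] d2 z(1) by force
  have "deriv (deriv k) w > 0" using convex w z c by auto
  then have "deriv k c > deriv k z" using w z by (smt (verit) mult_pos_pos)
  then show ?thesis
    unfolding tangent_gap_def using z l k0 c by (smt (verit) mult_strict_left_mono)
qed

lemma tangent_gap_strict_antimono_after_inflection:
  fixes k :: "real \<Rightarrow> real"
  assumes d1: "\<And>c. c > 0 \<Longrightarrow> (k has_real_derivative deriv k c) (at c)"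
    and d2: "\<And>c. c > 0 \<Longrightarrow> (deriv k has_real_derivative deriv (deriv k) c) (at c)"
    and concave: "\<And>c. c > a0 \<Longrightarrow> deriv (deriv k) c < 0" and a0: "a0 \<ge> 0"
    and ab: "a0 < a" "a < b"
  shows "tangent_gap k b < tangent_gap k a"
proof -
  have D: "(tangent_gap k has_real_derivative x * deriv (deriv k) x) (at x)" if "x > 0" for x
    unfolding tangent_gap_def[abs_def] using d1[OF that] d2[OF that]
    by (auto intro!: derivative_eq_intros)
  obtain z where z: "a < z" "z < b"
    "tangent_gap k b - tangent_gap k a = (b - a) * (z * deriv (deriv k) z)"
    using MVT2[OF ab(2), of "tangent_gap k" "\<lambda>x. x * deriv (deriv k) x"] D ab a0 by force
  have "z * deriv (deriv k) z < 0" using concave z ab a0 by (simp add: mult_pos_neg)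
  then have "(b - a) * (z * deriv (deriv k) z) < 0" using ab by (simp add: mult_pos_neg)
  then show ?thesis using z by linarith
qed

lemma critical_point_iff_tangent_gap:
  assumes "c > 0"
  shows "deriv k c = (k c - r) / c \<longleftrightarrow> tangent_gap k c = - r"
  using assms unfolding tangent_gap_def by (auto simp: field_simps)

lemma has_real_derivative_shifted_quotient:
  assumes "c > 0" and "(k has_real_derivative deriv k c) (at c)"
  shows "((\<lambda>x. (k x - r) / x) has_real_derivative (tangent_gap k c + r) / c\<^sup>2) (at c)"
  using assms unfolding tangent_gap_def
  by (auto intro!: derivative_eq_intros simp: power2_eq_square algebra_simps)

lemma continuous_attains_max_on_halfline:
  fixes f :: "real \<Rightarrow> real"
  assumes cont: "continuous_on {0<..} f" and lim: "(f \<longlongrightarrow> 0) at_top"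
    and near0: "eventually (\<lambda>c. f c \<le> 0) (at_right 0)"
    and pos: "c1 > 0" "f c1 > 0"
  shows "\<exists>m>0. \<forall>c>0. f c \<le> f m"
proof -
  obtain b where b: "b > 0" "\<And>c. 0 < c \<Longrightarrow> c < b \<Longrightarrow> f c \<le> 0"
    using near0 by (auto simp: eventually_at_right_field)
  define c0 where "c0 = b / 2"
  have c0: "c0 > 0" "\<And>c. 0 < c \<Longrightarrow> c \<le> c0 \<Longrightarrow> f c \<le> 0"
    using b unfolding c0_def by auto
  obtain N where N: "\<And>c. c \<ge> N \<Longrightarrow> f c < f c1"
    using order_tendstoD(2)[OF lim pos(2)] by (auto simp: eventually_at_top_linorder)
  define C where "C = max N c1"
  have c1: "c0 < c1" "c1 \<le> C" using c0 pos unfolding C_def by force+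
  have "continuous_on {c0..C} f"
    using cont by (rule continuous_on_subset) (use c0 in auto)
  then obtain m where m: "m \<in> {c0..C}" "\<And>y. y \<in> {c0..C} \<Longrightarrow> f y \<le> f m"
    using continuous_attains_sup[OF compact_Icc] c1 by (metis atLeastAtMost_iff
        atLeastatMost_empty_iff2 order.strict_implies_order order_trans)
  have "f c1 \<le> f m" using m c1 by auto
  moreover have "f c \<le> f m" if "c > 0" for c
    using c0 N m(2)[of c] \<open>f c1 \<le> f m\<close> pos that
    by (cases "c \<le> c0"; cases "c \<ge> C") (force simp: C_def)+
  ultimately show ?thesis using m c0 by (intro exI[of _ m]) auto
qed

lemma shifted_quotient_attains_max:
  fixes k :: "real \<Rightarrow> real"
  assumes cont: "continuous_on {0..} k" and k0: "k 0 = 0"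
    and lim: "(k \<longlongrightarrow> kmax) at_top" and r: "0 < r" "r < kmax"
  shows "\<exists>m>0. \<forall>c>0. (k c - r) / c \<le> (k m - r) / m"
proof -
  obtain N where N: "\<And>c. c \<ge> N \<Longrightarrow> k c > r"
    using order_tendstoD(1)[OF lim r(2)] by (auto simp: eventually_at_top_linorder)
  show ?thesis
  proof (rule continuous_attains_max_on_halfline[of _ "max N 1"])
    show "continuous_on {0<..} (\<lambda>c. (k c - r) / c)"
      by (intro continuous_intros continuous_on_subset[OF cont]) auto
    have "((\<lambda>c. (k c - r) * inverse c) \<longlongrightarrow> (kmax - r) * 0) at_top"
      by (intro tendsto_intros lim tendsto_inverse_0_at_top filterlim_ident)
    then show "((\<lambda>c. (k c - r) / c) \<longlongrightarrow> 0) at_top" by (simp add: divide_inverse)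
    have "(k \<longlongrightarrow> k 0) (at 0 within {0..})"
      using cont by (simp add: continuous_on_def)
    then have "(k \<longlongrightarrow> 0) (at_right 0)"
      unfolding k0 by (rule tendsto_within_subset) auto
    then have "eventually (\<lambda>c. k c < r) (at_right 0)" using order_tendstoD(2) r(1) by blast
    then show "eventually (\<lambda>c. (k c - r) / c \<le> 0) (at_right 0)"
      using eventually_at_right_less[of 0] by eventually_elim (simp add: divide_nonpos_pos)
    show "max N 1 > 0" and "(k (max N 1) - r) / max N 1 > 0"
      using N[of "max N 1"] by auto
  qed
qed

theorem lemma1:
  fixes k :: "real \<Rightarrow> real" and r kmax :: real
  assumes r_pos: "r > 0"
    and k_nonneg: "\<forall>c\<ge>0. k c \<ge> 0"
    and k0: "k 0 = 0"
    and k_cont: "continuous_on {0..} k"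
    and k_mono: "strict_mono_on {0..} k"
    and k_diff: "\<forall>c>0. k differentiable (at c)"
    and k_diff2: "\<forall>c>0. (deriv k) differentiable (at c)"
    and k_lim: "(k \<longlongrightarrow> kmax) at_top"
    and A3: "(\<forall>c>0. deriv (deriv k) c < 0) \<or>
             (\<exists>ci>0. (\<forall>c. 0 < c \<and> c < ci \<longrightarrow> deriv (deriv k) c > 0) \<and>
                      (\<forall>c>ci. deriv (deriv k) c < 0))"
    and alpha_gt: "kmax / r > 1"
  shows "\<exists>copt>0. deriv k copt = (k copt - r) / copt
           \<and> (\<forall>c>0. deriv k c = (k c - r) / c \<longrightarrow> c = copt)
           \<and> (\<forall>c>0. (k c - r) / c \<le> (k copt - r) / copt)
           \<and> (\<forall>ci>0. (\<forall>c. 0 < c \<and> c < ci \<longrightarrow> deriv (deriv k) c > 0) \<and>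
                     (\<forall>c>ci. deriv (deriv k) c < 0) \<longrightarrow> ci < copt)"
proof -
  have d1: "\<And>c. c > 0 \<Longrightarrow> (k has_real_derivative deriv k c) (at c)"
    using k_diff DERIV_deriv_iff_real_differentiable by blast
  have d2: "\<And>c. c > 0 \<Longrightarrow> (deriv k has_real_derivative deriv (deriv k) c) (at c)"
    using k_diff2 DERIV_deriv_iff_real_differentiable by blast
  obtain a0 where a0: "a0 \<ge> 0" "\<And>c. 0 < c \<Longrightarrow> c < a0 \<Longrightarrow> deriv (deriv k) c > 0"
    "\<And>c. c > a0 \<Longrightarrow> deriv (deriv k) c < 0"
    using A3 by (metis less_eq_real_def order.refl less_asym)
  have level_beyond_a0: "c > a0" if "c > 0" "tangent_gap k c = - r" for c
    using tangent_gap_pos_before_inflection[OF k0 k_cont d1 d2 a0(2), of c] that r_pos by force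
  have "r < kmax" using alpha_gt r_pos by (simp add: field_simps)
  then obtain m where m: "m > 0" "\<And>c. c > 0 \<Longrightarrow> (k c - r) / c \<le> (k m - r) / m"
    using shifted_quotient_attains_max[OF k_cont k0 k_lim r_pos] by blast
  have "(tangent_gap k m + r) / m\<^sup>2 = 0"
    using DERIV_local_max[OF has_real_derivative_shifted_quotient[OF m(1) d1[OF m(1)]] m(1)] m(2)
    by (force simp: dist_real_def)
  then have gap_m: "tangent_gap k m = - r" using m(1) by simp
  show ?thesis
  proof (intro exI[of _ m] conjI allI impI)
    fix c assume "c > 0" "deriv k c = (k c - r) / c"
    then have "tangent_gap k c = - r" by (simp add: critical_point_iff_tangent_gap)
    then show "c = m"
      using tangent_gap_strict_antimono_after_inflection[OF d1 d2 a0(3) a0(1)] gap_m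
        level_beyond_a0 \<open>c > 0\<close> m(1) by (metis linorder_neq_iff order.irrefl)
  next
    fix ci assume "ci > 0" "(\<forall>c. 0 < c \<and> c < ci \<longrightarrow> deriv (deriv k) c > 0) \<and>
                            (\<forall>c>ci. deriv (deriv k) c < 0)"
    then show "ci < m"
      using tangent_gap_pos_before_inflection[OF k0 k_cont d1 d2, of ci m] gap_m r_pos m(1)
      by force
  qed (use m gap_m critical_point_iff_tangent_gap in auto)
qed

end
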